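(* Let $d\ge1$ and let $p,q\in[0,1]$ satisfy $p\ge\sqrt{2qd}$. Let $u_0,\dots,u_{d-1}$, $v_0,\dots,v_{d-1}$ be $\mathrm{Bern}(p)$ random variables and $x_0,\dots,x_{d^2-1}$ be $\mathrm{Bern}(q)$ random variables, all mutually independent. Then for every subset $S\subseteq\{0,1,\dots,d^2-1\}$, $$\mathbb{P}\Big(\sum_{i\in S}u_{\lfloor i/d\rfloor}\,v_{i\bmod d}=0\Big)\le\mathbb{P}\Big(\sum_{i\in S}x_i=0\Big).$$
   Context: $\mathrm{Bern}(p)$ denotes the distribution on $\{0,1\}$ taking value $1$ with probability $p$. *)

theory Defs
  imports "HOL-Probability.Probability"
begin

text \<open>Joint law of d+d+d^2 mutually independent Bernoulli variables:
  u_0..u_{d-1}, v_0..v_{d-1} ~ Bern(p), x_0..x_{d^2-1} ~ Bern(q).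
  Outside their index ranges the functions take the dummy value False.\<close>
definition bern_vec :: "nat \<Rightarrow> real \<Rightarrow> (nat \<Rightarrow> bool) pmf" where
  "bern_vec n r = Pi_pmf {..<n} False (\<lambda>_. bernoulli_pmf r)"

definition joint_law :: "nat \<Rightarrow> real \<Rightarrow> real \<Rightarrow> ((nat \<Rightarrow> bool) \<times> (nat \<Rightarrow> bool) \<times> (nat \<Rightarrow> bool)) pmf" where
  "joint_law d p q = pair_pmf (bern_vec d p) (pair_pmf (bern_vec d p) (bern_vec (d^2) q))"

end

theory Submission
  imports Defs
begin

text \<open>View a set S of positions in the d\<times>d grid as a bipartite edge set E; the left-hand event says
  that the random rectangle {a. u a} \<times> {b. v b} misses E, the right-hand one has probability
  (1 - q)^|E|. Fix an edge (a, b) and discard every edge in row a or column b (at most 2d - 1 edges).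
  By independence the rectangle misses E with probability at most (1 - p^2) times the probability
  that it misses the remaining edges, and 1 - p^2 \<le> 1 - (2d - 1) q \<le> (1 - q)^(2d - 1) by Bernoulli's
  inequality, so induction on |E| finishes the argument.\<close>

lemma measure_pair_pmf_Times:
  "measure_pmf.prob (pair_pmf M N) (A \<times> B) = measure_pmf.prob M A * measure_pmf.prob N B"
proof -
  have "emeasure (pair_pmf M N) (A \<times> B) = (\<integral>\<^sup>+a. \<integral>\<^sup>+b. indicator A a * indicator B b \<partial>N \<partial>M)"
    by (simp add: nn_integral_pair_pmf' indicator_times flip: nn_integral_indicator)
  also have "\<dots> = emeasure M A * emeasure N B"
    by (simp add: nn_integral_cmult nn_integral_multc)
  finally have "ennreal (measure_pmf.prob (pair_pmf M N) (A \<times> B))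
      = ennreal (measure_pmf.prob M A * measure_pmf.prob N B)"
    by (simp add: measure_pmf.emeasure_eq_measure ennreal_mult)
  then show ?thesis by simp
qed

lemma pair_pmf_interchange:
  "map_pmf (\<lambda>((y, f), (z, g)). ((y, z), (f, g))) (pair_pmf (pair_pmf M1 N1) (pair_pmf M2 N2))
   = pair_pmf (pair_pmf M1 M2) (pair_pmf N1 N2)"
proof (rule pmf_eqI)
  fix i :: "('a \<times> 'b) \<times> ('c \<times> 'd)"
  obtain y z f g where i: "i = ((y, z), (f, g))" by (metis prod.collapse)
  have "inj (\<lambda>((y :: 'a, f :: 'c), (z :: 'b, g :: 'd)). ((y, z), (f, g)))"
    by (auto simp: inj_def)
  from pmf_map_inj'[OF this, of _ "((y, f), (z, g))"]
  show "pmf (map_pmf (\<lambda>((y, f), (z, g)). ((y, z), (f, g))) (pair_pmf (pair_pmf M1 N1) (pair_pmf M2 N2))) i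
        = pmf (pair_pmf (pair_pmf M1 M2) (pair_pmf N1 N2)) i"
    by (simp add: i pmf_pair)
qed

lemma measure_pair_Pi_pmf_insert_split:
  assumes "finite A" "finite B" "a \<notin> A" "b \<notin> B"
    and P_upd: "\<And>u v y z. P (u(a := y)) (v(b := z)) = P u v"
  shows "measure_pmf.prob (pair_pmf (Pi_pmf (insert a A) dflt M) (Pi_pmf (insert b B) dflt' N))
           {(u, v). R (u a) (v b) \<and> P u v}
       = measure_pmf.prob (pair_pmf (M a) (N b)) {(y, z). R y z}
         * measure_pmf.prob (pair_pmf (Pi_pmf A dflt M) (Pi_pmf B dflt' N)) {(u, v). P u v}"
proof -
  let ?W = "pair_pmf (pair_pmf (M a) (Pi_pmf A dflt M)) (pair_pmf (N b) (Pi_pmf B dflt' N))"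
  let ?upd = "\<lambda>(yu, zv). ((\<lambda>(y, u). u(a := y)) yu, (\<lambda>(z, v). v(b := z)) zv)"
  let ?swap = "\<lambda>((y, u), (z, v)). ((y, z), (u, v))"
  have "pair_pmf (Pi_pmf (insert a A) dflt M) (Pi_pmf (insert b B) dflt' N) = map_pmf ?upd ?W"
    by (simp only: Pi_pmf_insert[OF assms(1,3)] Pi_pmf_insert[OF assms(2,4)] map_pair)
  then have "measure_pmf.prob (pair_pmf (Pi_pmf (insert a A) dflt M) (Pi_pmf (insert b B) dflt' N))
               {(u, v). R (u a) (v b) \<and> P u v}
           = measure_pmf.prob ?W (?upd -` {(u, v). R (u a) (v b) \<and> P u v})"
    by simp
  also have "?upd -` {(u, v). R (u a) (v b) \<and> P u v} = ?swap -` ({(y, z). R y z} \<times> {(u, v). P u v})"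
    by (auto simp: P_upd)
  also have "measure_pmf.prob ?W \<dots> = measure_pmf.prob (map_pmf ?swap ?W) ({(y, z). R y z} \<times> {(u, v). P u v})"
    by simp
  finally show ?thesis
    by (simp only: pair_pmf_interchange measure_pair_pmf_Times)
qed

lemma measure_bernoulli_pair_not_both:
  assumes "0 \<le> p" "p \<le> 1"
  shows "measure_pmf.prob (pair_pmf (bernoulli_pmf p) (bernoulli_pmf p)) {(y, z). \<not> (y \<and> z)} = 1 - p^2"
proof -
  have "{(y, z). \<not> (y \<and> z)} = {(False, False), (False, True), (True, False)}" by auto
  then show ?thesis
    using assms by (simp add: measure_measure_pmf_finite pmf_pair power2_eq_square algebra_simps)
qed

lemma one_minus_le_power_one_minus:
  fixes q r :: real
  assumes "q \<le> 1" "real n * q \<le> r"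
  shows "1 - r \<le> (1 - q) ^ n"
  using Bernoulli_inequality[of "-q" n] assms by simp

lemma card_le_card_off_cross:
  fixes E :: "(nat \<times> nat) set"
  assumes "E \<subseteq> {..<d} \<times> {..<d}" "(a, b) \<in> E"
  shows "card E \<le> card {e \<in> E. fst e \<noteq> a \<and> snd e \<noteq> b} + (2 * d - 1)"
proof -
  let ?E' = "{e \<in> E. fst e \<noteq> a \<and> snd e \<noteq> b}" and ?C = "{a} \<times> {..<d} \<union> {..<d} \<times> {b}"
  have "finite E" using assms(1) finite_subset by blast
  then have "card E \<le> card (?E' \<union> ?C)"
    using assms(1) by (intro card_mono) auto
  also have "\<dots> \<le> card ?E' + card ?C" by (rule card_Un_le)
  also have "card ?C = 2 * d - 1"
    using assms card_Un_Int[of "{a} \<times> {..<d}" "{..<d} \<times> {b}"]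
    by (auto simp: card_cartesian_product Times_Int_Times)
  finally show ?thesis .
qed

definition rect_avoids :: "('a \<times> 'b) set \<Rightarrow> (('a \<Rightarrow> bool) \<times> ('b \<Rightarrow> bool)) set" where
  "rect_avoids E = {(u, v). \<forall>(x, y) \<in> E. \<not> (u x \<and> v y)}"

lemma prob_rect_avoids_le:
  fixes p q :: real
  assumes "0 \<le> p" "p \<le> 1" "0 \<le> q" "q \<le> 1" "2 * q * real d \<le> p^2"
    and "finite A" "finite B" "E \<subseteq> A \<times> B" "E \<subseteq> {..<d} \<times> {..<d}"
  shows "measure_pmf.prob (pair_pmf (Pi_pmf A False (\<lambda>_. bernoulli_pmf p)) (Pi_pmf B False (\<lambda>_. bernoulli_pmf p)))
           (rect_avoids E) \<le> (1 - q) ^ card E"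
  using assms(6-)
proof (induction "card E" arbitrary: A B E rule: less_induct)
  case less
  show ?case
  proof (cases "E = {}")
    case True
    then show ?thesis by simp
  next
    case False
    then obtain a b where ab: "(a, b) \<in> E" by auto
    define A' B' E' where "A' = A - {a}" and "B' = B - {b}" and "E' = {e \<in> E. fst e \<noteq> a \<and> snd e \<noteq> b}"
    have "a \<in> A" "b \<in> B" "a < d" using ab less.prems by auto
    then have A: "A = insert a A'" and B: "B = insert b B'" and "d \<ge> 1" by (auto simp: A'_def B'_def)
    have "finite E"
      using less.prems(1-3) by (meson finite_SigmaI finite_subset)
    then have "card E' < card E"
      using ab by (intro psubset_card_mono) (auto simp: E'_def, force)
    then have IH: "measure_pmf.prob (pair_pmf (Pi_pmf A' False (\<lambda>_. bernoulli_pmf p))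
                     (Pi_pmf B' False (\<lambda>_. bernoulli_pmf p))) (rect_avoids E') \<le> (1 - q) ^ card E'"
      using less.prems by (intro less.hyps) (auto simp: A'_def B'_def E'_def)
    have "1 - p^2 \<le> (1 - q) ^ (2 * d - 1)"
      using \<open>d \<ge> 1\<close> assms(3-5) by (intro one_minus_le_power_one_minus) (auto simp: algebra_simps)
    let ?M = "pair_pmf (Pi_pmf A False (\<lambda>_. bernoulli_pmf p)) (Pi_pmf B False (\<lambda>_. bernoulli_pmf p))"
    have "measure_pmf.prob ?M (rect_avoids E)
        \<le> measure_pmf.prob ?M {(u, v). \<not> (u a \<and> v b) \<and> (u, v) \<in> rect_avoids E'}"
      using ab by (intro measure_pmf.finite_measure_mono) (auto simp: rect_avoids_def E'_def)
    also have "\<dots> = measure_pmf.prob (pair_pmf (bernoulli_pmf p) (bernoulli_pmf p)) {(y, z). \<not> (y \<and> z)}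
        * measure_pmf.prob (pair_pmf (Pi_pmf A' False (\<lambda>_. bernoulli_pmf p))
            (Pi_pmf B' False (\<lambda>_. bernoulli_pmf p))) {(u, v). (u, v) \<in> rect_avoids E'}"
      unfolding A B using less.prems(1,2)
      by (intro measure_pair_Pi_pmf_insert_split) (auto simp: A'_def B'_def E'_def rect_avoids_def)
    also have "\<dots> \<le> (1 - q) ^ (2 * d - 1) * (1 - q) ^ card E'"
      unfolding measure_bernoulli_pair_not_both[OF assms(1,2)]
      using IH \<open>1 - p^2 \<le> (1 - q) ^ (2 * d - 1)\<close> assms(4) by (intro mult_mono) auto
    also have "\<dots> \<le> (1 - q) ^ card E"
      using card_le_card_off_cross[OF less.prems(4) ab] assms(3,4)
      by (auto simp: E'_def simp flip: power_add intro: power_decreasing)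
    finally show ?thesis .
  qed
qed

lemma measure_Pi_pmf_bernoulli_all_False:
  assumes "finite A" "S \<subseteq> A" "0 \<le> q" "q \<le> 1"
  shows "measure_pmf.prob (Pi_pmf A dflt (\<lambda>_. bernoulli_pmf q)) {x. \<forall>i \<in> S. \<not> x i} = (1 - q) ^ card S"
proof -
  have "{x. \<forall>i \<in> S. \<not> x i} = Pi A (\<lambda>i. if i \<in> S then {False} else UNIV)"
    using assms(2) by (auto simp: Pi_def)
  then have "measure_pmf.prob (Pi_pmf A dflt (\<lambda>_. bernoulli_pmf q)) {x. \<forall>i \<in> S. \<not> x i}
      = (\<Prod>i\<in>A. if i \<in> S then 1 - q else 1)"
    using assms by (simp add: measure_Pi_pmf_Pi measure_pmf_single if_distrib cong: if_cong)
  also have "\<dots> = (1 - q) ^ card S"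
    using assms(1,2) by (simp add: prod.If_cases Int_absorb1)
  finally show ?thesis .
qed

lemma map_joint_law_uv:
  "map_pmf (\<lambda>(u, v, x). (u, v)) (joint_law d p q) = pair_pmf (bern_vec d p) (bern_vec d p)"
proof -
  have proj: "(\<lambda>(u, v, x). (u, v)) = (\<lambda>(u, vx). (id u, fst vx))" by auto
  show ?thesis
    unfolding proj joint_law_def map_pair map_fst_pair_pmf map_pmf_id by simp
qed

lemma map_joint_law_x:
  "map_pmf (\<lambda>(u, v, x). x) (joint_law d p q) = bern_vec (d^2) q"
proof -
  have "map_pmf (\<lambda>(u, v, x). x) (joint_law d p q) = map_pmf snd (map_pmf snd (joint_law d p q))"
    by (simp add: map_pmf_comp case_prod_beta')
  then show ?thesis
    by (simp only: joint_law_def map_snd_pair_pmf)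
qed

lemma measure_joint_law_products_zero:
  assumes "finite S"
  shows "measure_pmf.prob (joint_law d p q)
           {(u, v, x). (\<Sum>i\<in>S. (of_bool (u (i div d)) * of_bool (v (i mod d)) :: nat)) = 0}
       = measure_pmf.prob (pair_pmf (bern_vec d p) (bern_vec d p)) (rect_avoids ((\<lambda>i. (i div d, i mod d)) ` S))"
proof -
  have event: "{(u, v, x). (\<Sum>i\<in>S. (of_bool (u (i div d)) * of_bool (v (i mod d)) :: nat)) = 0}
      = (\<lambda>(u, v, x). (u, v)) -` rect_avoids ((\<lambda>i. (i div d, i mod d)) ` S)"
    using assms by (auto simp: rect_avoids_def)
  show ?thesis
    by (simp only: event measure_map_pmf map_joint_law_uv[of d p q, symmetric])
qed

lemma measure_joint_law_x_zero:
  assumes "S \<subseteq> {..<d^2}" "0 \<le> q" "q \<le> 1"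
  shows "measure_pmf.prob (joint_law d p q) {(u, v, x). (\<Sum>i\<in>S. (of_bool (x i) :: nat)) = 0} = (1 - q) ^ card S"
proof -
  have "finite S" using assms(1) finite_subset by blast
  then have event: "{(u, v, x). (\<Sum>i\<in>S. (of_bool (x i) :: nat)) = 0}
      = (\<lambda>(u, v, x). x) -` {x. \<forall>i \<in> S. \<not> x i}"
    by auto
  have "measure_pmf.prob (joint_law d p q) ((\<lambda>(u, v, x). x) -` {x. \<forall>i \<in> S. \<not> x i})
      = measure_pmf.prob (bern_vec (d^2) q) {x. \<forall>i \<in> S. \<not> x i}"
    by (simp only: measure_map_pmf[symmetric] map_joint_law_x)
  then show ?thesis
    using assms by (simp add: event bern_vec_def measure_Pi_pmf_bernoulli_all_False)
qed

theorem lemmaD2: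
  fixes d :: nat and p q :: real and S :: "nat set"
  assumes "d \<ge> 1"
    and "0 \<le> p" "p \<le> 1" "0 \<le> q" "q \<le> 1"
    and "p \<ge> sqrt (2 * q * real d)"
    and "S \<subseteq> {..<d^2}"
  shows "measure_pmf.prob (joint_law d p q)
           {(u, v, x). (\<Sum>i\<in>S. (of_bool (u (i div d)) * of_bool (v (i mod d)) :: nat)) = 0}
         \<le> measure_pmf.prob (joint_law d p q)
           {(u, v, x). (\<Sum>i\<in>S. (of_bool (x i) :: nat)) = 0}"
proof -
  define E where "E = (\<lambda>i. (i div d, i mod d)) ` S"
  have "card E = card S"
    unfolding E_def by (intro card_image inj_onI) (metis div_mult_mod_eq prod.inject)
  have "E \<subseteq> {..<d} \<times> {..<d}"
    using assms(1,7) by (auto simp: E_def power2_eq_square less_mult_imp_div_less)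
  have "2 * q * real d \<le> p^2"
    using assms(4,6) real_sqrt_le_iff[of "2 * q * real d" "p^2"] by (simp add: assms(2))
  have "measure_pmf.prob (pair_pmf (bern_vec d p) (bern_vec d p)) (rect_avoids E) \<le> (1 - q) ^ card S"
    using prob_rect_avoids_le[OF assms(2-5) \<open>2 * q * real d \<le> p^2\<close>, of "{..<d}" "{..<d}" E]
      \<open>E \<subseteq> {..<d} \<times> {..<d}\<close> \<open>card E = card S\<close>
    by (simp add: bern_vec_def)
  moreover have "finite S" using assms(7) finite_subset by blast
  ultimately show ?thesis
    by (simp only: E_def measure_joint_law_products_zero measure_joint_law_x_zero[OF assms(7,4,5)])
qed

end
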